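(* Let $n\ge 1$ be an integer and $\alpha,\beta\in(0,1]$. For every configuration $\mathcal{C}\in\{\bullet,\circ\}^n$ set $$\mathbb{P}^{\mathrm{st}}_n\{\mathcal{C}\} := Z_n^{-1}\sum_{T\in\mathcal{T}_n,\ R(T)=\mathcal{C}} \mu(T), \qquad Z_n:=\sum_{T\in\mathcal{T}_n}\mu(T),$$ where $\mu(T)=\alpha^{-l(T)}\beta^{-r(T)}$. Then $\mathbb{P}^{\mathrm{st}}_n$ is a stationary measure of the $n$-site open-boundary TASEP with parameters $\alpha,\beta$. That is, for every $\mathcal{C}$, $$\mathbb{P}^{\mathrm{st}}_n\{\mathcal{C}\}\sum_{\mathcal{C}'}W(\mathcal{C}\to\mathcal{C}')=\sum_{\mathcal{C}'}\mathbb{P}^{\mathrm{st}}_n\{\mathcal{C}'\}\,W(\mathcal{C}'\to\mathcal{C}).$$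
   Context: Open-boundary TASEP on $n$ sites: this is the continuous-time Markov chain on $\{\bullet,\circ\}^n$ (strings of length $n$, where $\bullet$ denotes a particle and $\circ$ a hole). Its transition rates are as follows, with $\mathcal{A},\mathcal{A}'$ arbitrary strings: - $W(\circ\mathcal{A}\to\bullet\mathcal{A})=\alpha$; - $W(\mathcal{A}\bullet\to\mathcal{A}\circ)=\beta$; - $W(\mathcal{A}\bullet\circ\mathcal{A}'\to\mathcal{A}\circ\bullet\mathcal{A}')=1$; - $W(\mathcal{C}\to\mathcal{C}')=0$ for all other pairs. A plane binary tree is a finite rooted tree in which every vertex is either an endpoint (a leaf, with no children) or has exactly two children, an ordered left child and right child. Every non-root vertex is thus either a left descendent or a right descendent of its parent. The endpoints are ordered from left to right in the planar order. $\mathcal{T}_n$ denotes the set of plane binary trees with exactly $n+2$ endpoints. The reduced configuration of $T\in\mathcal{T}_n$ is $R(T)=(t_1,\dots,t_n)\in\{\bullet,\circ\}^n$. Here $t_k=\bullet$ if the $(k+1)$-th endpoint from the left is a left child, and $t_k=\circ$ if it is a right child. The leftmost and rightmost endpoints are ignored. $l(T)$ (respectively $r(T)$) is the number of vertices lying strictly between the leftmost (respectively rightmost) endpoint and the root on the path joining them, excluding both the endpoint and the root. *)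

theory Defs
  imports Complex_Main
begin

text \<open>Configurations: lists of booleans, True = particle, False = hole.\<close>

datatype ptree = Leaf | Node ptree ptree

fun num_leaves :: "ptree \<Rightarrow> nat" where
  "num_leaves Leaf = 1"
| "num_leaves (Node l r) = num_leaves l + num_leaves r"

definition trees :: "nat \<Rightarrow> ptree set" where
  "trees n = {T. num_leaves T = n + 2}"

text \<open>Sides of the endpoints, left to right, of a subtree which is a left child (True)
  or a right child (False).\<close>
fun leaf_sides :: "bool \<Rightarrow> ptree \<Rightarrow> bool list" where
  "leaf_sides b Leaf = [b]"
| "leaf_sides b (Node l r) = leaf_sides True l @ leaf_sides False r"

fun root_sides :: "ptree \<Rightarrow> bool list" where
  "root_sides Leaf = []"
| "root_sides (Node l r) = leaf_sides True l @ leaf_sides False r"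

definition reduced :: "ptree \<Rightarrow> bool list" where
  "reduced T = butlast (tl (root_sides T))"

fun left_depth :: "ptree \<Rightarrow> nat" where
  "left_depth Leaf = 0"
| "left_depth (Node l r) = Suc (left_depth l)"

fun right_depth :: "ptree \<Rightarrow> nat" where
  "right_depth Leaf = 0"
| "right_depth (Node l r) = Suc (right_depth r)"

text \<open>Number of vertices strictly between the endpoint and the root.\<close>
definition lT :: "ptree \<Rightarrow> nat" where "lT T = left_depth T - 1"
definition rT :: "ptree \<Rightarrow> nat" where "rT T = right_depth T - 1"

definition mu :: "real \<Rightarrow> real \<Rightarrow> ptree \<Rightarrow> real" where
  "mu \<alpha> \<beta> T = (1 / \<alpha>) ^ lT T * (1 / \<beta>) ^ rT T"

definition Zn :: "real \<Rightarrow> real \<Rightarrow> nat \<Rightarrow> real" where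
  "Zn \<alpha> \<beta> n = (\<Sum>T\<in>trees n. mu \<alpha> \<beta> T)"

definition Pst :: "real \<Rightarrow> real \<Rightarrow> nat \<Rightarrow> bool list \<Rightarrow> real" where
  "Pst \<alpha> \<beta> n C = (\<Sum>T\<in>{T \<in> trees n. reduced T = C}. mu \<alpha> \<beta> T) / Zn \<alpha> \<beta> n"

definition configs :: "nat \<Rightarrow> bool list set" where
  "configs n = {C. length C = n}"

text \<open>TASEP transition rates (the three kinds of transitions never coincide).\<close>
definition W :: "real \<Rightarrow> real \<Rightarrow> bool list \<Rightarrow> bool list \<Rightarrow> real" where
  "W \<alpha> \<beta> C C' =
     (if \<exists>A. C = False # A \<and> C' = True # A then \<alpha> else 0)
   + (if \<exists>A. C = A @ [True] \<and> C' = A @ [False] then \<beta> else 0)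
   + (if \<exists>A A'. C = A @ [True, False] @ A' \<and> C' = A @ [False, True] @ A' then 1 else 0)"

end

theory Submission
  imports Defs
begin

(* Stationarity of the tree measure for the open TASEP.  Let f(C) be the sum of mu(T) over the
   trees T whose endpoints read True # C @ [False], so that Pst = f / Zn.

   Replacing an endpoint of T by a cherry (two new endpoints, a left and a right child) is
   a bijection, "sprout", between trees with a marked endpoint and trees with a marked adjacent
   pair (True, False) of endpoints.  It changes mu only when the endpoint is the leftmost or the
   rightmost one, by a factor 1/alpha resp. 1/beta.  Summing over the bijection yields the
   relations of the matrix product ansatz of Derrida-Evans-Hakim-Pasquier:
       f(u 10 v) = f(u 1 v) + f(u 0 v),   beta f(u 1) = f(u),   alpha f(0 u) = f(u).

   For every f satisfying these relations (locale matrix_ansatz) the global balance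
   equation holds: flow out of C minus flow into C telescopes along the sites of C, each
   adjacent pair contributing a difference current(j+1) - current(j) and the two boundaries
   cancelling the end terms.  The theorem follows by dividing by the normalisation Zn. *)

section \<open>Endpoint sides of plane binary trees\<close>

lemma num_leaves_pos: "1 \<le> num_leaves t"
  by (induction t) auto

lemma length_leaf_sides: "length (leaf_sides b t) = num_leaves t"
  by (induction b t rule: leaf_sides.induct) auto

text \<open>The leftmost endpoint of a left subtree is a left child, the rightmost endpoint of a
  right subtree a right child; hence every proper tree reads True ... False.\<close>

lemma leaf_sides_left_child: "\<exists>w. leaf_sides True t = True # w"
  by (induction t) auto

lemma leaf_sides_right_child: "\<exists>w. leaf_sides False t = w @ [False]"
  by (induction t) auto

lemma leaf_sides_frame:
  assumes "t \<noteq> Leaf" shows "\<exists>w. leaf_sides b t = True # w @ [False]"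
proof -
  obtain l r where "t = Node l r" using assms by (cases t) auto
  moreover obtain w1 where "leaf_sides True l = True # w1" using leaf_sides_left_child by blast
  moreover obtain w2 where "leaf_sides False r = w2 @ [False]" using leaf_sides_right_child by blast
  ultimately show ?thesis by auto
qed

text \<open>Only finitely many trees have a given endpoint word, so all tree sums below are finite.\<close>

lemma finite_leaf_sides: "finite {t. leaf_sides b t = w}"
proof -
  have "finite {t. num_leaves t \<le> k}" for k
  proof (induction k)
    case 0
    have "{t. num_leaves t \<le> 0} = {}" using num_leaves_pos[THEN order.trans] by fastforce
    then show ?case by (metis finite.emptyI)
  next
    case (Suc k)
    have "{t. num_leaves t \<le> Suc k} \<subseteq> insert Leaf (case_prod Node ` ({t. num_leaves t \<le> k} \<times> {t. num_leaves t \<le> k}))"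
    proof
      fix t assume "t \<in> {t. num_leaves t \<le> Suc k}"
      then show "t \<in> insert Leaf (case_prod Node ` ({t. num_leaves t \<le> k} \<times> {t. num_leaves t \<le> k}))"
      proof (cases t)
        case (Node l r)
        then show ?thesis using \<open>t \<in> _\<close> num_leaves_pos[of l] num_leaves_pos[of r] by force
      qed simp
    qed
    then show ?case using Suc by (auto intro: finite_subset)
  qed
  from this[of "length w"] show ?thesis
    by (rule finite_subset[rotated]) (auto simp: length_leaf_sides)
qed

section \<open>Sprouting a cherry\<close>

text \<open>\<open>sprout k t\<close> replaces the \<open>k\<close>-th endpoint (counted from 0) of \<open>t\<close> by a cherry.\<close>

fun sprout :: "nat \<Rightarrow> ptree \<Rightarrow> ptree" where
  "sprout k Leaf = Node Leaf Leaf"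
| "sprout k (Node l r) =
     (if k < num_leaves l then Node (sprout k l) r else Node l (sprout (k - num_leaves l) r))"

lemma num_leaves_sprout: "num_leaves (sprout k t) = Suc (num_leaves t)"
  by (induction k t rule: sprout.induct) auto

lemma sprout_not_Leaf: "sprout k t \<noteq> Leaf"
  by (cases t) auto

lemma leaf_sides_sprout:
  "k < num_leaves t \<Longrightarrow>
   leaf_sides b (sprout k t) = take k (leaf_sides b t) @ True # False # drop (Suc k) (leaf_sides b t)"
proof (induction t arbitrary: b k)
  case (Node l r)
  show ?case
  proof (cases "k < num_leaves l")
    case False
    then have "k - num_leaves l < num_leaves r" using Node.prems by simp
    then show ?thesis using Node False by (simp add: length_leaf_sides Suc_diff_le)
  qed (use Node in \<open>simp add: length_leaf_sides\<close>)
qed simp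

lemma sprout_inj:
  "k < num_leaves t \<Longrightarrow> k < num_leaves t' \<Longrightarrow> sprout k t = sprout k t' \<Longrightarrow> t = t'"
proof (induction t arbitrary: k t')
  case Leaf
  then show ?case by (cases t') (auto simp: sprout_not_Leaf[symmetric] split: if_splits)
next
  case (Node l r)
  then show ?case
  proof (cases t')
    case (Node l' r')
    then show ?thesis using Node.prems Node.IH(1)[of k l'] Node.IH(2)[of "k - num_leaves l" r']
      by (auto simp: num_leaves_sprout split: if_splits)
  qed (auto simp: sprout_not_Leaf split: if_splits)
qed

lemma sprout_at_cherry:
  "Suc k < num_leaves t \<Longrightarrow> leaf_sides b t ! k \<Longrightarrow> \<not> leaf_sides b t ! Suc k
   \<Longrightarrow> \<exists>t0. t = sprout k t0 \<and> k < num_leaves t0"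
proof (induction t arbitrary: b k)
  case (Node l r)
  consider "Suc k < num_leaves l" | "Suc k = num_leaves l" | "num_leaves l \<le> k" by linarith
  then show ?case
  proof cases
    case 1
    then have "leaf_sides True l ! k" "\<not> leaf_sides True l ! Suc k"
      using Node.prems by (auto simp: nth_append length_leaf_sides)
    then obtain l0 where "l = sprout k l0" "k < num_leaves l0" using Node.IH(1) 1 by blast
    then show ?thesis by (intro exI[of _ "Node l0 r"]) auto
  next
    case 2
    have "leaf_sides True l ! k" "\<not> leaf_sides False r ! 0"
      using Node.prems 2 by (auto simp: nth_append length_leaf_sides)
    moreover have "last (leaf_sides True l) = leaf_sides True l ! k"
      using 2[symmetric] length_leaf_sides[of True l] by (subst last_conv_nth) auto
    moreover have "hd (leaf_sides False r) = leaf_sides False r ! 0"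
      using num_leaves_pos[of r] length_leaf_sides[of False r] by (subst hd_conv_nth) auto
    ultimately have "last (leaf_sides True l)" "\<not> hd (leaf_sides False r)" by simp_all
    then have "l = Leaf" "r = Leaf"
      using leaf_sides_frame[of l True] leaf_sides_frame[of r False] by force+
    then show ?thesis using 2 by (intro exI[of _ Leaf]) auto
  next
    case 3
    then have "leaf_sides False r ! (k - num_leaves l)" "\<not> leaf_sides False r ! Suc (k - num_leaves l)"
      "Suc (k - num_leaves l) < num_leaves r"
      using Node.prems by (auto simp: nth_append length_leaf_sides Suc_diff_le)
    then obtain r0 where "r = sprout (k - num_leaves l) r0" "k - num_leaves l < num_leaves r0"
      using Node.IH(2) by blast
    then show ?thesis using 3 by (intro exI[of _ "Node l r0"]) auto
  qed
qed simp

lemma sprout_surj: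
  assumes sides: "leaf_sides b t = p @ True # False # q"
  shows "\<exists>t0 x. t = sprout (length p) t0 \<and> leaf_sides b t0 = p @ x # q"
proof -
  let ?k = "length p"
  have "Suc ?k < num_leaves t" "leaf_sides b t ! ?k" "\<not> leaf_sides b t ! Suc ?k"
    using length_leaf_sides[of b t] sides by (auto simp: nth_append)
  then obtain t0 where t0: "t = sprout ?k t0" "?k < num_leaves t0"
    using sprout_at_cherry by blast
  let ?s = "leaf_sides b t0"
  have "take ?k ?s @ True # False # drop (Suc ?k) ?s = p @ True # False # q"
    using sides t0 leaf_sides_sprout by simp
  moreover have "length (take ?k ?s) = ?k" using t0(2) by (simp add: length_leaf_sides)
  ultimately have "take ?k ?s = p" "drop (Suc ?k) ?s = q" by auto
  then have "?s = p @ ?s ! ?k # q"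
    using id_take_nth_drop[of ?k ?s] t0(2) by (simp add: length_leaf_sides)
  then show ?thesis using t0(1) by blast
qed

text \<open>Sprouting at position \<open>length p\<close> is a bijection from the trees with word
  \<open>p @ x # q\<close> (\<open>x\<close> arbitrary) onto the trees with word \<open>p @ True # False # q\<close>.\<close>

lemma sum_over_cherry:
  fixes g :: "ptree \<Rightarrow> 'a::comm_monoid_add" and b :: bool and p q :: "bool list"
  defines "S x \<equiv> {t. leaf_sides b t = p @ x # q}"
  shows "(\<Sum>t | leaf_sides b t = p @ True # False # q. g t)
       = (\<Sum>t\<in>S True. g (sprout (length p) t)) + (\<Sum>t\<in>S False. g (sprout (length p) t))"
proof -
  let ?k = "length p"
  have in_range: "?k < num_leaves t" if "t \<in> S x" for t x
    using that length_leaf_sides[of b t] by (simp add: S_def)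
  have image: "{t. leaf_sides b t = p @ True # False # q} = sprout ?k ` (S True \<union> S False)"
  proof (intro equalityI subsetI)
    fix t assume "t \<in> {t. leaf_sides b t = p @ True # False # q}"
    then obtain t0 x where "t = sprout ?k t0" "t0 \<in> S x"
      using sprout_surj[of b t p q] by (auto simp: S_def)
    then show "t \<in> sprout ?k ` (S True \<union> S False)" by (cases x) auto
  next
    fix t assume "t \<in> sprout ?k ` (S True \<union> S False)"
    then obtain t0 x where "t = sprout ?k t0" "t0 \<in> S x" by auto
    then show "t \<in> {t. leaf_sides b t = p @ True # False # q}"
      using leaf_sides_sprout[OF in_range] by (auto simp: S_def)
  qed
  have "inj_on (sprout ?k) (S True \<union> S False)"
    by (rule inj_onI) (use in_range sprout_inj in blast)
  moreover have "finite (S x)" for x unfolding S_def by (rule finite_leaf_sides)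
  moreover have "S True \<inter> S False = {}" by (auto simp: S_def)
  ultimately show ?thesis
    unfolding image by (simp add: sum.reindex sum.union_disjoint)
qed

lemma left_depth_sprout:
  "k < num_leaves t \<Longrightarrow> left_depth (sprout k t) = (if k = 0 then Suc (left_depth t) else left_depth t)"
proof (induction t arbitrary: k)
  case (Node l r) then show ?case using num_leaves_pos[of l] by auto
qed simp

lemma right_depth_sprout:
  "k < num_leaves t \<Longrightarrow>
   right_depth (sprout k t) = (if k = num_leaves t - 1 then Suc (right_depth t) else right_depth t)"
proof (induction t arbitrary: k)
  case (Node l r) then show ?case using num_leaves_pos[of l] num_leaves_pos[of r] by auto
qed simp

lemma mu_sprout:
  assumes "t \<noteq> Leaf" and "k < num_leaves t"
  shows "mu a b (sprout k t) =
    (if k = 0 then 1 / a else 1) * (if k = num_leaves t - 1 then 1 / b else 1) * mu a b t"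
proof -
  obtain dl dr where "left_depth t = Suc dl" "right_depth t = Suc dr"
    using assms(1) by (cases t) auto
  then show ?thesis
    using left_depth_sprout[OF assms(2)] right_depth_sprout[OF assms(2)]
    by (simp add: mu_def lT_def rT_def)
qed

section \<open>The matrix product relations for the tree weight\<close>

text \<open>Unnormalised weight of a configuration: its trees are those whose endpoint word is the
  configuration framed by the two ignored extremal endpoints.\<close>

definition tree_weight :: "real \<Rightarrow> real \<Rightarrow> bool list \<Rightarrow> real" where
  "tree_weight a b C = (\<Sum>t | leaf_sides False t = True # C @ [False]. mu a b t)"

lemma tree_weight_bulk:
  "tree_weight a b (u @ True # False # v) = tree_weight a b (u @ True # v) + tree_weight a b (u @ False # v)"
proof -
  let ?k = "Suc (length u)"
  have interior: "mu a b (sprout ?k t) = mu a b t" if "leaf_sides False t = (True # u) @ x # v @ [False]" for t x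
  proof -
    have "num_leaves t = length u + length v + 3" using that length_leaf_sides[of False t] by simp
    then show ?thesis using mu_sprout[of t ?k] by (cases t) auto
  qed
  have "tree_weight a b (u @ True # False # v)
      = (\<Sum>t | leaf_sides False t = (True # u) @ True # False # v @ [False]. mu a b t)"
    by (simp add: tree_weight_def)
  also have "\<dots> = (\<Sum>t | leaf_sides False t = (True # u) @ True # v @ [False]. mu a b (sprout ?k t))
                 + (\<Sum>t | leaf_sides False t = (True # u) @ False # v @ [False]. mu a b (sprout ?k t))"
    using sum_over_cherry[of "mu a b" False "True # u" "v @ [False]"] by simp
  also have "\<dots> = tree_weight a b (u @ True # v) + tree_weight a b (u @ False # v)"
    unfolding tree_weight_def by (intro arg_cong2[where f = "(+)"] sum.cong) (auto intro: interior)
  finally show ?thesis .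
qed

text \<open>At the right end only right children can be sprouted into the last endpoint,
  and the new rightmost endpoint costs a factor \<open>1 / b\<close>; symmetrically on the left.\<close>

lemma tree_weight_right:
  assumes "b \<noteq> 0" shows "b * tree_weight a b (u @ [True]) = tree_weight a b u"
proof -
  let ?k = "Suc (length u)"
  have no_trees: "leaf_sides False t \<noteq> (True # u) @ [True]" for t
    using leaf_sides_right_child[of t] by (metis append1_eq_conv)
  have last_leaf: "mu a b (sprout ?k t) = 1 / b * mu a b t"
    if "leaf_sides False t = (True # u) @ [False]" for t
  proof -
    have "num_leaves t = length u + 2" using that length_leaf_sides[of False t] by simp
    then show ?thesis using mu_sprout[of t ?k] by (cases t) auto
  qed
  have "tree_weight a b (u @ [True]) = (\<Sum>t | leaf_sides False t = (True # u) @ [True, False]. mu a b t)"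
    by (simp add: tree_weight_def)
  also have "\<dots> = (\<Sum>t | leaf_sides False t = (True # u) @ [False]. mu a b (sprout ?k t))"
    using sum_over_cherry[of "mu a b" False "True # u" "[]"] no_trees by simp
  also have "\<dots> = 1 / b * tree_weight a b u"
    unfolding tree_weight_def sum_distrib_left by (rule sum.cong) (simp_all add: last_leaf)
  finally show ?thesis using assms by simp
qed

lemma tree_weight_left:
  assumes "a \<noteq> 0" shows "a * tree_weight a b (False # u) = tree_weight a b u"
proof -
  have no_trees: "leaf_sides False t \<noteq> False # u @ [False]" for t
    using leaf_sides_frame[of t False] by (cases "t = Leaf") auto
  have first_leaf: "mu a b (sprout 0 t) = 1 / a * mu a b t"
    if "leaf_sides False t = True # u @ [False]" for t
  proof -
    have "num_leaves t = length u + 2" using that length_leaf_sides[of False t] by simp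
    then show ?thesis using mu_sprout[of t 0] by (cases t) auto
  qed
  have "tree_weight a b (False # u) = (\<Sum>t | leaf_sides False t = [] @ True # False # u @ [False]. mu a b t)"
    by (simp add: tree_weight_def)
  also have "\<dots> = (\<Sum>t | leaf_sides False t = True # u @ [False]. mu a b (sprout 0 t))"
    using sum_over_cherry[of "mu a b" False "[]" "u @ [False]"] no_trees by simp
  also have "\<dots> = 1 / a * tree_weight a b u"
    unfolding tree_weight_def sum_distrib_left by (rule sum.cong) (simp_all add: first_leaf)
  finally show ?thesis using assms by simp
qed

lemma reduced_eq_iff:
  assumes "t \<noteq> Leaf" shows "reduced t = C \<longleftrightarrow> leaf_sides False t = True # C @ [False]"
proof -
  obtain w where w: "leaf_sides False t = True # w @ [False]" using leaf_sides_frame[OF assms] by blast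
  have "root_sides t = leaf_sides False t" using assms by (cases t) auto
  then show ?thesis using w by (simp add: reduced_def)
qed

lemma Pst_eq_tree_weight:
  assumes "length C = n" shows "Pst a b n C = tree_weight a b C / Zn a b n"
proof -
  have "{t \<in> trees n. reduced t = C} = {t. leaf_sides False t = True # C @ [False]}"
  proof (intro equalityI subsetI)
    fix t assume "t \<in> {t \<in> trees n. reduced t = C}"
    moreover then have "t \<noteq> Leaf" by (auto simp: trees_def)
    ultimately show "t \<in> {t. leaf_sides False t = True # C @ [False]}" by (simp add: reduced_eq_iff)
  next
    fix t assume t: "t \<in> {t. leaf_sides False t = True # C @ [False]}"
    then have "num_leaves t = n + 2" using assms length_leaf_sides[of False t] by simp
    moreover then have "t \<noteq> Leaf" by auto
    ultimately show "t \<in> {t \<in> trees n. reduced t = C}" using t by (simp add: trees_def reduced_eq_iff)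
  qed
  then show ?thesis by (simp add: Pst_def tree_weight_def)
qed

section \<open>The transitions of the TASEP\<close>

definition swap_at :: "nat \<Rightarrow> 'a list \<Rightarrow> 'a list" where
  "swap_at j C = take j C @ C ! Suc j # C ! j # drop (Suc (Suc j)) C"

definition sites :: "bool list \<Rightarrow> bool \<Rightarrow> bool \<Rightarrow> nat set" where
  "sites C x y = {j \<in> {..<length C - 1}. C ! j = x \<and> C ! Suc j = y}"

definition swaps :: "bool list \<Rightarrow> bool \<Rightarrow> bool \<Rightarrow> bool list set" where
  "swaps C x y = (\<lambda>j. swap_at j C) ` sites C x y"

lemma sum_sites:
  "(\<Sum>j\<in>sites C x y. h j) = (\<Sum>j<length C - 1. if C ! j = x \<and> C ! Suc j = y then h j else 0)"
  unfolding sites_def by (rule sum.inter_filter) simp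

lemma split_at_pair: "Suc j < length C \<Longrightarrow> C = take j C @ C ! j # C ! Suc j # drop (Suc (Suc j)) C"
  by (metis Cons_nth_drop_Suc Suc_lessD id_take_nth_drop)

lemma first_pattern_iff: "(\<exists>A. C = x # A \<and> C' = y # A) \<longleftrightarrow> C \<noteq> [] \<and> hd C = x \<and> C' = y # tl C"
  by (cases C) auto

lemma last_pattern_iff:
  "(\<exists>A. C = A @ [x] \<and> C' = A @ [y]) \<longleftrightarrow> C \<noteq> [] \<and> last C = x \<and> C' = butlast C @ [y]"
  by (cases C rule: rev_cases) auto

lemma swap_pattern_iff:
  "(\<exists>A A'. C = A @ [x, y] @ A' \<and> C' = A @ [y, x] @ A') \<longleftrightarrow> C' \<in> swaps C x y"
proof
  assume "\<exists>A A'. C = A @ [x, y] @ A' \<and> C' = A @ [y, x] @ A'"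
  then obtain A A' where "C = A @ [x, y] @ A'" "C' = A @ [y, x] @ A'" by blast
  then show "C' \<in> swaps C x y"
    unfolding swaps_def sites_def by (intro image_eqI[of _ _ "length A"]) (auto simp: swap_at_def nth_append)
next
  assume "C' \<in> swaps C x y"
  then obtain j where j: "Suc j < length C" "C ! j = x" "C ! Suc j = y" "C' = swap_at j C"
    unfolding swaps_def sites_def by (auto simp: less_diff_conv)
  then have "C = take j C @ [x, y] @ drop (Suc (Suc j)) C" "C' = take j C @ [y, x] @ drop (Suc (Suc j)) C"
    using split_at_pair[OF j(1)] by (simp_all add: swap_at_def)
  then show "\<exists>A A'. C = A @ [x, y] @ A' \<and> C' = A @ [y, x] @ A'" by blast
qed

lemma W_from:
  "W \<alpha> \<beta> C C' =
     (if C \<noteq> [] \<and> \<not> hd C \<and> C' = True # tl C then \<alpha> else 0)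
   + (if C \<noteq> [] \<and> last C \<and> C' = butlast C @ [False] then \<beta> else 0)
   + (if C' \<in> swaps C True False then 1 else 0)"
  unfolding W_def first_pattern_iff last_pattern_iff swap_pattern_iff by simp

lemma W_into:
  "W \<alpha> \<beta> C' C =
     (if C \<noteq> [] \<and> hd C \<and> C' = False # tl C then \<alpha> else 0)
   + (if C \<noteq> [] \<and> \<not> last C \<and> C' = butlast C @ [True] then \<beta> else 0)
   + (if C' \<in> swaps C False True then 1 else 0)"
proof -
  have "(\<exists>A. C' = False # A \<and> C = True # A) \<longleftrightarrow> (\<exists>A. C = True # A \<and> C' = False # A)"
       "(\<exists>A. C' = A @ [True] \<and> C = A @ [False]) \<longleftrightarrow> (\<exists>A. C = A @ [False] \<and> C' = A @ [True])"
       "(\<exists>A A'. C' = A @ [True, False] @ A' \<and> C = A @ [False, True] @ A')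
          \<longleftrightarrow> (\<exists>A A'. C = A @ [False, True] @ A' \<and> C' = A @ [True, False] @ A')"
    by blast+
  then show ?thesis
    unfolding W_def first_pattern_iff last_pattern_iff swap_pattern_iff by simp
qed

lemma finite_configs: "finite (configs n)"
  using finite_lists_length_eq[of "UNIV :: bool set" n] by (simp add: configs_def)

lemma sum_single_target:
  fixes g :: "'a \<Rightarrow> real"
  assumes "finite A"
  shows "(\<Sum>C'\<in>A. g C' * (if P \<and> C' = t then c else 0)) = (if P \<and> t \<in> A then g t * c else 0)"
proof -
  have "(\<Sum>C'\<in>A. g C' * (if P \<and> C' = t then c else 0)) = (\<Sum>C'\<in>A. if C' = t then (if P then g t * c else 0) else 0)"
    by (rule sum.cong) auto
  then show ?thesis using assms by simp
qed

lemma swap_at_inj: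
  assumes "x \<noteq> y" shows "inj_on (\<lambda>j. swap_at j C) (sites C x y)"
proof -
  have differ: "swap_at i C \<noteq> swap_at j C" if "i \<in> sites C x y" "j \<in> sites C x y" "i < j" for i j
  proof -
    have "Suc i < length C" "Suc j < length C" "C ! i = x" "C ! Suc i = y"
      using that by (auto simp: sites_def)
    then have "swap_at i C ! i = y" "swap_at j C ! i = x"
      using \<open>i < j\<close> by (auto simp: swap_at_def nth_append)
    then show ?thesis using assms by metis
  qed
  show ?thesis
    by (rule inj_onI) (metis differ linorder_neqE_nat)
qed

lemma sum_swaps:
  fixes g :: "bool list \<Rightarrow> real"
  assumes "x \<noteq> y" and "length C = n"
  shows "(\<Sum>C'\<in>configs n. g C' * (if C' \<in> swaps C x y then 1 else 0)) = (\<Sum>j\<in>sites C x y. g (swap_at j C))"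
proof -
  have "swaps C x y \<subseteq> configs n"
    using assms(2) by (auto simp: swaps_def sites_def configs_def swap_at_def)
  have "(\<Sum>C'\<in>configs n. g C' * (if C' \<in> swaps C x y then 1 else 0))
      = (\<Sum>C'\<in>configs n. if C' \<in> swaps C x y then g C' else 0)"
    by (rule sum.cong) auto
  also have "\<dots> = sum g (swaps C x y)"
    using sum.inter_restrict[OF finite_configs[of n], of g "swaps C x y"] \<open>swaps C x y \<subseteq> configs n\<close>
    by (simp add: Int_absorb1)
  also have "\<dots> = (\<Sum>j\<in>sites C x y. g (swap_at j C))"
    unfolding swaps_def using sum.reindex[OF swap_at_inj[OF assms(1)]] by simp
  finally show ?thesis .
qed

lemma exit_rate:
  assumes "length C = n" and "C \<noteq> []"
  shows "(\<Sum>C'\<in>configs n. W \<alpha> \<beta> C C')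
       = (if hd C then 0 else \<alpha>) + (if last C then \<beta> else 0) + card (sites C True False)"
proof -
  have "True # tl C \<in> configs n" "butlast C @ [False] \<in> configs n"
    using assms by (auto simp: configs_def)
  then show ?thesis
    unfolding W_from sum.distrib
    using sum_single_target[OF finite_configs, of "\<lambda>_. 1"] sum_swaps[OF _ assms(1), of True False "\<lambda>_. 1"]
      assms(2) by simp
qed

lemma entry_flux:
  fixes g :: "bool list \<Rightarrow> real"
  assumes "length C = n" and "C \<noteq> []"
  shows "(\<Sum>C'\<in>configs n. g C' * W \<alpha> \<beta> C' C)
       = (if hd C then \<alpha> * g (False # tl C) else 0) + (if last C then 0 else \<beta> * g (butlast C @ [True]))
         + (\<Sum>j\<in>sites C False True. g (swap_at j C))"
proof -
  have "False # tl C \<in> configs n" "butlast C @ [True] \<in> configs n"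
    using assms by (auto simp: configs_def)
  then show ?thesis
    unfolding W_into distrib_left sum.distrib
    using sum_single_target[OF finite_configs, of g] sum_swaps[OF _ assms(1), of False True g]
      assms(2) by (simp add: mult.commute)
qed

section \<open>Global balance from the matrix product relations\<close>

locale matrix_ansatz =
  fixes \<alpha> \<beta> :: real and f :: "bool list \<Rightarrow> real"
  assumes bulk: "f (u @ True # False # v) = f (u @ True # v) + f (u @ False # v)"
    and right: "\<beta> * f (u @ [True]) = f u"
    and left: "\<alpha> * f (False # u) = f u"
begin

text \<open>Signed weight of the configuration with site \<open>i\<close> deleted; the flows of the chain
  are differences of these currents.\<close>

definition current :: "bool list \<Rightarrow> nat \<Rightarrow> real" where
  "current C i = (if C ! i then - 1 else 1) * f (take i C @ drop (Suc i) C)"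

lemma site_flux:
  assumes "Suc j < length C"
  shows "(if C ! j \<and> \<not> C ! Suc j then f C else 0) - (if \<not> C ! j \<and> C ! Suc j then f (swap_at j C) else 0)
       = current C (Suc j) - current C j"
proof -
  define u v where "u = take j C" and "v = drop (Suc (Suc j)) C"
  have C: "C = u @ C ! j # C ! Suc j # v"
    using split_at_pair[OF assms] by (simp add: u_def v_def)
  have "take j C @ drop (Suc j) C = u @ C ! Suc j # v"
    using assms by (simp add: u_def v_def Cons_nth_drop_Suc)
  moreover have "take (Suc j) C @ drop (Suc (Suc j)) C = u @ C ! j # v"
    using assms by (simp add: u_def v_def take_Suc_conv_app_nth)
  moreover have "swap_at j C = u @ C ! Suc j # C ! j # v"
    by (simp add: swap_at_def u_def v_def)
  ultimately show ?thesis
    unfolding current_def using bulk[of u v] arg_cong[OF C, of f]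
    by (cases "C ! j"; cases "C ! Suc j") simp_all
qed

lemma bulk_flux:
  "f C * card (sites C True False) - (\<Sum>j\<in>sites C False True. f (swap_at j C))
   = current C (length C - 1) - current C 0"
proof -
  have "f C * card (sites C True False) - (\<Sum>j\<in>sites C False True. f (swap_at j C))
      = (\<Sum>j<length C - 1. (if C ! j \<and> \<not> C ! Suc j then f C else 0)
                            - (if \<not> C ! j \<and> C ! Suc j then f (swap_at j C) else 0))"
    using sum_sites[where C = C and x = True and y = False and h = "\<lambda>_. f C"]
      sum_sites[where C = C and x = False and y = True and h = "\<lambda>j. f (swap_at j C)"]
    by (simp add: sum_subtractf mult.commute)
  also have "\<dots> = (\<Sum>j<length C - 1. current C (Suc j) - current C j)"
    by (rule sum.cong) (simp_all add: site_flux)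
  also have "\<dots> = current C (length C - 1) - current C 0"
    by (rule sum_lessThan_telescope)
  finally show ?thesis .
qed

text \<open>The boundary flows are the end terms of the telescoping sum, with opposite signs.\<close>

lemma left_boundary_flux:
  assumes "C \<noteq> []"
  shows "(if hd C then 0 else \<alpha> * f C) - (if hd C then \<alpha> * f (False # tl C) else 0) = current C 0"
proof -
  have current: "current C 0 = (if hd C then - 1 else 1) * f (tl C)"
    using assms by (simp add: current_def hd_conv_nth drop_Suc)
  show ?thesis
  proof (cases "hd C")
    case True
    then show ?thesis using current left[of "tl C"] by simp
  next
    case False
    then have "C = False # tl C" using assms by (cases C) auto
    then have "\<alpha> * f C = f (tl C)" using left[of "tl C"] by metis
    then show ?thesis using current False by simp
  qed
qed

lemma right_boundary_flux:
  assumes "C \<noteq> []"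
  shows "(if last C then \<beta> * f C else 0) - (if last C then 0 else \<beta> * f (butlast C @ [True]))
       = - current C (length C - 1)"
proof -
  have current: "current C (length C - 1) = (if last C then - 1 else 1) * f (butlast C)"
    using assms by (simp add: current_def last_conv_nth butlast_conv_take)
  show ?thesis
  proof (cases "last C")
    case True
    then have "C = butlast C @ [True]" using assms append_butlast_last_id[OF assms] by simp
    then have "\<beta> * f C = f (butlast C)" using right[of "butlast C"] by metis
    then show ?thesis using current True by simp
  next
    case False
    then show ?thesis using current right[of "butlast C"] by simp
  qed
qed

text \<open>Outflow from \<open>C\<close> equals inflow into \<open>C\<close>: bulk and boundary fluxes cancel.\<close>

theorem global_balance:
  assumes "length C = n" and "C \<noteq> []"
  shows "f C * (\<Sum>C'\<in>configs n. W \<alpha> \<beta> C C') = (\<Sum>C'\<in>configs n. f C' * W \<alpha> \<beta> C' C)"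
  using left_boundary_flux[OF assms(2)] right_boundary_flux[OF assms(2)] bulk_flux[of C]
  unfolding exit_rate[OF assms] entry_flux[OF assms]
  by (simp add: algebra_simps split: if_splits)

end

lemma tree_weight_matrix_ansatz:
  assumes "\<alpha> \<noteq> 0" and "\<beta> \<noteq> 0"
  shows "matrix_ansatz \<alpha> \<beta> (tree_weight \<alpha> \<beta>)"
  using tree_weight_bulk tree_weight_right[OF assms(2)] tree_weight_left[OF assms(1)]
  by unfold_locales

theorem proposition1:
  fixes \<alpha> \<beta> :: real and n :: nat
  assumes "n \<ge> 1" and "0 < \<alpha>" "\<alpha> \<le> 1" and "0 < \<beta>" "\<beta> \<le> 1"
  shows "\<forall>C \<in> configs n.
           Pst \<alpha> \<beta> n C * (\<Sum>C'\<in>configs n. W \<alpha> \<beta> C C')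
         = (\<Sum>C'\<in>configs n. Pst \<alpha> \<beta> n C' * W \<alpha> \<beta> C' C)"
proof
  fix C assume "C \<in> configs n"
  then have len: "length C = n" and nonempty: "C \<noteq> []"
    using assms(1) by (auto simp: configs_def)
  let ?f = "tree_weight \<alpha> \<beta>" and ?Z = "Zn \<alpha> \<beta> n"
  have "(\<Sum>C'\<in>configs n. Pst \<alpha> \<beta> n C' * W \<alpha> \<beta> C' C) = (\<Sum>C'\<in>configs n. ?f C' * W \<alpha> \<beta> C' C) / ?Z"
    unfolding sum_divide_distrib by (rule sum.cong) (simp_all add: Pst_eq_tree_weight configs_def)
  also have "\<dots> = ?f C * (\<Sum>C'\<in>configs n. W \<alpha> \<beta> C C') / ?Z"
    using matrix_ansatz.global_balance[OF tree_weight_matrix_ansatz len nonempty] assms(2,4) by simp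
  also have "\<dots> = Pst \<alpha> \<beta> n C * (\<Sum>C'\<in>configs n. W \<alpha> \<beta> C C')"
    by (simp add: Pst_eq_tree_weight[OF len])
  finally show "Pst \<alpha> \<beta> n C * (\<Sum>C'\<in>configs n. W \<alpha> \<beta> C C')
              = (\<Sum>C'\<in>configs n. Pst \<alpha> \<beta> n C' * W \<alpha> \<beta> C' C)" ..
qed

end
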